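(* Let $d>1$, let $n$ be a square-free positive integer and $r\mid n$. Let $\boldsymbol\tau=(\tau_1,\tau_2)\in\mathbb H^2$ and let $T_{\boldsymbol\tau}=\mathbb C^2/\Lambda_{\mathfrak b_r,\boldsymbol\tau}$ be the associated $(1,n)$-polarised abelian surface with real multiplication by $\mathcal O_{d^2}$. Let $E_1=\mathbb C\times\{0\}/(\Lambda_{\mathfrak b_r,\boldsymbol\tau}\cap(\mathbb C\times\{0\}))$ and $E_2=\{0\}\times\mathbb C/(\Lambda_{\mathfrak b_r,\boldsymbol\tau}\cap(\{0\}\times\mathbb C))$ be the elliptic curves in $T_{\boldsymbol\tau}$ generated by the eigenforms $du_1,du_2$. Then the restriction of the $(1,n)$-polarisation $\mathcal L$ of $T_{\boldsymbol\tau}$ satisfies $$\mathcal L|_{E_1}=\operatorname{lcm}(d,r)\cdot\mathcal O_{E_1}(0),\qquad \mathcal L|_{E_2}=\operatorname{lcm}(d,\tfrac nr)\cdot\mathcal O_{E_2}(0).$$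
   Context: $\mathcal O_{d^2}=\{(a_1,a_2)\in\mathbb Z^2:a_1\equiv a_2\bmod d\}\subset\mathbb Q\oplus\mathbb Q$ with componentwise multiplication; trace $\operatorname{tr}(a)=a_1+a_2$; $\mathcal O_{d^2}^\vee=\{x\in\mathbb Q^2:\operatorname{tr}(x\mathcal O_{d^2})\subset\mathbb Z\}=\langle\frac1d(1,-1),(0,1)\rangle_{\mathbb Z}$. For square-free $n$ and $r\mid n$, $\mathfrak b_r=\{(a_1,a_2)\in\mathbb Z^2:a_1\equiv a_2\bmod d,\ a_1\equiv0\bmod r,\ a_2\equiv0\bmod n/r\}$. On $\mathfrak b_r\oplus\mathcal O_{d^2}^\vee$ the trace pairing $\langle(a,b),(x,y)\rangle=\operatorname{tr}(ay-bx)=a_1y_1+a_2y_2-b_1x_1-b_2x_2$ is symplectic of type $(1,n)$. For $\boldsymbol\tau\in\mathbb H^2$, $\Lambda_{\mathfrak b_r,\boldsymbol\tau}=\{(a_1+b_1\tau_1,a_2+b_2\tau_2)^T: a\in\mathfrak b_r,b\in\mathcal O_{d^2}^\vee\}\subset\mathbb C^2$; $T_{\boldsymbol\tau}=\mathbb C^2/\Lambda_{\mathfrak b_r,\boldsymbol\tau}$ carries the polarisation $\mathcal L$ given by the trace pairing (transported to the lattice) and real multiplication by $\mathcal O_{d^2}$ acting componentwise; $du_1,du_2$ are the coordinate forms. "$\mathcal L|_{E}=k\,\mathcal O_E(0)$" means the restricted symplectic form on the rank-2 lattice of $E$ is $k$ times a unimodular one. *)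

theory Defs
  imports "HOL-Analysis.Analysis" "HOL-Computational_Algebra.Squarefree"
begin

text \<open>Elements of \<open>\<rat> \<oplus> \<rat>\<close> are represented as pairs of reals with rational entries.\<close>

definition b_ideal :: "nat \<Rightarrow> nat \<Rightarrow> nat \<Rightarrow> (real \<times> real) set" where
  "b_ideal d n r = {(of_int a1, of_int a2) | a1 a2 :: int.
      a1 mod int d = a2 mod int d \<and> int r dvd a1 \<and> int (n div r) dvd a2}"

definition O_dual :: "nat \<Rightarrow> (real \<times> real) set" where
  "O_dual d = {(of_int k / real d, - of_int k / real d + of_int m) | k m :: int. True}"

definition lattice_map :: "complex \<times> complex \<Rightarrow> (real \<times> real) \<times> (real \<times> real) \<Rightarrow> complex \<times> complex" where
  "lattice_map \<tau> p = (case p of ((a1, a2), (b1, b2)) \<Rightarrow>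
      (of_real a1 + of_real b1 * fst \<tau>, of_real a2 + of_real b2 * snd \<tau>))"

definition Lambda :: "nat \<Rightarrow> nat \<Rightarrow> nat \<Rightarrow> complex \<times> complex \<Rightarrow> (complex \<times> complex) set" where
  "Lambda d n r \<tau> = lattice_map \<tau> ` (b_ideal d n r \<times> O_dual d)"

text \<open>Coordinates: the inverse of \<open>lattice_map \<tau>\<close> (an R-linear isomorphism \<open>\<real>^4 \<rightarrow> \<complex>^2\<close>
  for \<open>\<tau> \<in> \<H>^2\<close>).\<close>
definition coord_b :: "complex \<Rightarrow> complex \<Rightarrow> real" where
  "coord_b t z = Im z / Im t"
definition coord_a :: "complex \<Rightarrow> complex \<Rightarrow> real" where
  "coord_a t z = Re z - coord_b t z * Re t"

text \<open>The polarisation: the trace pairing \<open>tr(a y - b x)\<close> transported to \<open>\<complex>^2\<close>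
  (R-bilinear extension of its values on the lattice).\<close>
definition pol_form :: "complex \<times> complex \<Rightarrow> complex \<times> complex \<Rightarrow> complex \<times> complex \<Rightarrow> real" where
  "pol_form \<tau> v w =
     coord_a (fst \<tau>) (fst v) * coord_b (fst \<tau>) (fst w)
   + coord_a (snd \<tau>) (snd v) * coord_b (snd \<tau>) (snd w)
   - coord_b (fst \<tau>) (fst v) * coord_a (fst \<tau>) (fst w)
   - coord_b (snd \<tau>) (snd v) * coord_a (snd \<tau>) (snd w)"

text \<open>A symplectic form restricted to a rank-2 lattice \<open>S\<close> is \<open>k\<close> times a unimodular one:
  \<open>S\<close> has a \<open>\<int>\<close>-basis \<open>e, f\<close> with \<open>E(e,f) = k\<close>.\<close>
definition is_k_times_unimodular ::
  "('v::real_vector) set \<Rightarrow> ('v \<Rightarrow> 'v \<Rightarrow> real) \<Rightarrow> int \<Rightarrow> bool" where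
  "is_k_times_unimodular S E k \<longleftrightarrow>
     (\<exists>e f. (\<forall>x. x \<in> S \<longleftrightarrow> (\<exists>m l :: int. x = of_int m *\<^sub>R e + of_int l *\<^sub>R f))
          \<and> (\<forall>m l :: int. of_int m *\<^sub>R e + of_int l *\<^sub>R f = 0 \<longrightarrow> m = 0 \<and> l = 0)
          \<and> E e f = of_int k)"

end

theory Submission
  imports Defs
begin

text \<open>Both eigenform curves are cut out of the lattice by one vanishing coordinate. If
  \<open>a\<^sub>2 + b\<^sub>2\<tau>\<^sub>2 = 0\<close> then \<open>a\<^sub>2 = b\<^sub>2 = 0\<close>, so \<open>b\<^sub>1 = k/d\<close> is an integer and
  \<open>a\<^sub>1 \<equiv> a\<^sub>2 = 0 (mod d)\<close>; together with \<open>r | a\<^sub>1\<close> this leaves exactly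
  \<open>\<int> lcm(d,r) + \<int> \<tau>\<^sub>1\<close>, on whose basis \<open>lcm(d,r), \<tau>\<^sub>1\<close> the trace pairing takes the value
  \<open>lcm(d,r)\<close>. Swapping the two coordinates maps \<open>b\<^sub>r\<close> to \<open>b\<^sub>n\<^sub>/\<^sub>r\<close>, fixes the dual
  \<open>O\<^sup>\<or>\<close> and preserves the pairing, so the second curve is the first one for \<open>n/r\<close>.\<close>

lemma real_combination_eq_0_iff:
  fixes a b :: real and t :: complex
  assumes "Im t > 0"
  shows "of_real a + of_real b * t = 0 \<longleftrightarrow> a = 0 \<and> b = 0"
proof
  assume eq: "of_real a + of_real b * t = 0"
  have "b * Im t = Im (of_real a + of_real b * t)" by simp
  with eq have "b * Im t = 0" by simp
  with assms have "b = 0" by simp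
  with eq show "a = 0 \<and> b = 0" by simp
qed simp

lemma lattice_map_snd_eq_0_iff:
  assumes "Im (snd \<tau>) > 0"
  shows "snd (lattice_map \<tau> (a, b)) = 0 \<longleftrightarrow> snd a = 0 \<and> snd b = 0"
  using real_combination_eq_0_iff[OF assms]
  by (cases a; cases b) (simp add: lattice_map_def)

lemma b_ideal_inter_snd_eq_0:
  "{a \<in> b_ideal d n r. snd a = 0} = range (\<lambda>m. (of_int (m * int (lcm d r)), 0))"
proof -
  have "{a \<in> b_ideal d n r. snd a = 0} =
      {(of_int a1, 0) | a1 :: int. a1 mod int d = 0 mod int d \<and> int r dvd a1}"
    unfolding b_ideal_def by auto
  also have "\<dots> = {(of_int a1, 0) | a1 :: int. int (lcm d r) dvd a1}"
    unfolding lcm_int_int_eq [symmetric] lcm_least_iff by (simp add: mod_eq_0_iff_dvd)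
  also have "\<dots> = range (\<lambda>m. (of_int (m * int (lcm d r)), 0))"
    by (auto simp: dvd_def mult.commute simp del: of_int_mult)
  finally show ?thesis .
qed

lemma O_dual_inter_snd_eq_0:
  assumes "d > 0"
  shows "{b \<in> O_dual d. snd b = 0} = range (\<lambda>l. (of_int l, 0))"
proof -
  have "- of_int k / real d + of_int m = (0::real) \<longleftrightarrow> k = int d * m" for k m :: int
  proof -
    have "- of_int k / real d + of_int m = (0::real) \<longleftrightarrow> real_of_int k = real d * of_int m"
      using assms by (auto simp: field_simps)
    also have "\<dots> \<longleftrightarrow> k = int d * m"
      by (metis of_int_eq_iff of_int_mult of_int_of_nat_eq)
    finally show ?thesis .
  qed
  then show ?thesis
    unfolding O_dual_def using assms by auto
qed

lemma Lambda_inter_snd_eq_0: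
  assumes "d > 0" and "Im (snd \<tau>) > 0"
  shows "Lambda d n r \<tau> \<inter> {v. snd v = 0} =
    range (\<lambda>(m, l). of_int m *\<^sub>R (of_nat (lcm d r), 0) + of_int l *\<^sub>R (fst \<tau>, 0))"
proof -
  have "Lambda d n r \<tau> \<inter> {v. snd v = 0} =
      lattice_map \<tau> ` ({a \<in> b_ideal d n r. snd a = 0} \<times> {b \<in> O_dual d. snd b = 0})"
    unfolding Lambda_def using lattice_map_snd_eq_0_iff[OF assms(2)] by fastforce
  also have "\<dots> = range (\<lambda>(m, l). of_int m *\<^sub>R (of_nat (lcm d r), 0) + of_int l *\<^sub>R (fst \<tau>, 0))"
  proof -
    have "lattice_map \<tau> \<circ> map_prod (\<lambda>m. (of_int (m * int (lcm d r)), 0)) (\<lambda>l. (of_int l, 0)) =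
        (\<lambda>(m, l). of_int m *\<^sub>R (of_nat (lcm d r), 0) + of_int l *\<^sub>R (fst \<tau>, 0))"
      by (simp add: fun_eq_iff lattice_map_def scaleR_conv_of_real)
    then show ?thesis
      unfolding b_ideal_inter_snd_eq_0 O_dual_inter_snd_eq_0[OF assms(1)]
        map_prod_surj_on[OF refl refl, symmetric] image_comp
      by simp
  qed
  finally show ?thesis .
qed

lemma is_k_times_unimodular_first_axis:
  assumes "Im (fst \<tau>) > 0" and "L > 0"
  shows "is_k_times_unimodular
    (range (\<lambda>(m, l). of_int m *\<^sub>R (of_nat L, 0) + of_int l *\<^sub>R (fst \<tau>, 0))) (pol_form \<tau>) (int L)"
  unfolding is_k_times_unimodular_def
proof (intro exI conjI allI)
  fix x :: "complex \<times> complex"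
  show "x \<in> range (\<lambda>(m, l). of_int m *\<^sub>R (of_nat L, 0) + of_int l *\<^sub>R (fst \<tau>, 0)) \<longleftrightarrow>
      (\<exists>m l :: int. x = of_int m *\<^sub>R (of_nat L, 0) + of_int l *\<^sub>R (fst \<tau>, 0))"
    by auto
next
  fix m l :: int
  show "of_int m *\<^sub>R (of_nat L, 0) + of_int l *\<^sub>R (fst \<tau>, 0) = (0 :: complex \<times> complex)
      \<longrightarrow> m = 0 \<and> l = 0"
  proof
    assume "of_int m *\<^sub>R (of_nat L, 0) + of_int l *\<^sub>R (fst \<tau>, 0) = (0 :: complex \<times> complex)"
    then have "of_real (of_int m * of_nat L) + of_real (of_int l) * fst \<tau> = 0"
      by (simp add: scaleR_conv_of_real zero_prod_def)
    then have "real_of_int m * real L = 0 \<and> real_of_int l = 0"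
      using real_combination_eq_0_iff[OF assms(1)] by blast
    with assms(2) show "m = 0 \<and> l = 0"
      by simp
  qed
next
  show "pol_form \<tau> (of_nat L, 0) (fst \<tau>, 0) = of_int (int L)"
    using assms(1) by (simp add: pol_form_def coord_a_def coord_b_def)
qed

lemma is_k_times_unimodular_Lambda_first_axis:
  assumes "d > 0" and "r > 0" and "Im (fst \<tau>) > 0" and "Im (snd \<tau>) > 0"
  shows "is_k_times_unimodular (Lambda d n r \<tau> \<inter> {v. snd v = 0}) (pol_form \<tau>) (int (lcm d r))"
  unfolding Lambda_inter_snd_eq_0[OF assms(1,4)]
  using assms by (intro is_k_times_unimodular_first_axis) (simp_all add: lcm_pos_nat)

lemma is_k_times_unimodular_linear_image:
  assumes "is_k_times_unimodular S E' k" and "linear f" and "inj f"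
    and "\<And>v w. E (f v) (f w) = E' v w"
  shows "is_k_times_unimodular (f ` S) E k"
proof -
  obtain e e' where S: "\<And>x. x \<in> S \<longleftrightarrow> (\<exists>m l :: int. x = of_int m *\<^sub>R e + of_int l *\<^sub>R e')"
    and indep: "\<And>m l :: int. of_int m *\<^sub>R e + of_int l *\<^sub>R e' = 0 \<Longrightarrow> m = 0 \<and> l = 0"
    and "E' e e' = of_int k"
    using assms(1) unfolding is_k_times_unimodular_def by blast
  have f_comb: "f (of_int m *\<^sub>R e + of_int l *\<^sub>R e') = of_int m *\<^sub>R f e + of_int l *\<^sub>R f e'"
    for m l :: int
    using assms(2) by (simp add: linear_add linear_scale)
  show ?thesis
    unfolding is_k_times_unimodular_def
  proof (intro exI conjI allI)
    show "x \<in> f ` S \<longleftrightarrow> (\<exists>m l :: int. x = of_int m *\<^sub>R f e + of_int l *\<^sub>R f e')" for x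
    proof
      assume "x \<in> f ` S"
      then obtain y where "y \<in> S" and "x = f y"
        by blast
      then obtain m l :: int where "x = f (of_int m *\<^sub>R e + of_int l *\<^sub>R e')"
        using S[of y] by blast
      then show "\<exists>m l :: int. x = of_int m *\<^sub>R f e + of_int l *\<^sub>R f e'"
        unfolding f_comb by blast
    next
      assume "\<exists>m l :: int. x = of_int m *\<^sub>R f e + of_int l *\<^sub>R f e'"
      then obtain m l :: int where "x = f (of_int m *\<^sub>R e + of_int l *\<^sub>R e')"
        unfolding f_comb by blast
      moreover have "of_int m *\<^sub>R e + of_int l *\<^sub>R e' \<in> S"
        unfolding S by blast
      ultimately show "x \<in> f ` S"
        by blast
    qed
    show "of_int m *\<^sub>R f e + of_int l *\<^sub>R f e' = 0 \<longrightarrow> m = 0 \<and> l = 0" for m l :: int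
      using indep f_comb assms(2,3) by (metis linear_0 injD)
    show "E (f e) (f e') = of_int k"
      using assms(4) \<open>E' e e' = of_int k\<close> by simp
  qed
qed

lemma linear_swap: "linear (prod.swap :: 'a::real_vector \<times> 'b::real_vector \<Rightarrow> 'b \<times> 'a)"
  by (rule linearI) auto

lemma b_ideal_swap:
  assumes "n > 0" and "r dvd n"
  shows "prod.swap ` b_ideal d n r = b_ideal d n (n div r)"
proof -
  have "n div (n div r) = r"
    using assms by (simp add: div_div_eq_right)
  then show ?thesis
    unfolding b_ideal_def by (auto simp: image_iff)
qed

lemma O_dual_swap:
  assumes "d > 0"
  shows "prod.swap ` O_dual d = O_dual d"
proof -
  have "prod.swap x \<in> O_dual d" if "x \<in> O_dual d" for x
  proof -
    from that obtain k m :: int where x: "x = (of_int k / real d, - of_int k / real d + of_int m)"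
      unfolding O_dual_def by blast
    have "prod.swap x = (of_int (int d * m - k) / real d, - of_int (int d * m - k) / real d + of_int m)"
      using assms by (simp add: x field_simps)
    then show ?thesis
      unfolding O_dual_def by blast
  qed
  then show ?thesis
    by (auto intro: image_eqI[where x = "prod.swap _"])
qed

lemma lattice_map_swap:
  "prod.swap (lattice_map \<tau> (a, b)) = lattice_map (prod.swap \<tau>) (prod.swap a, prod.swap b)"
  by (cases a; cases b) (simp add: lattice_map_def)

lemma Lambda_swap:
  assumes "d > 0" and "n > 0" and "r dvd n"
  shows "prod.swap ` Lambda d n r \<tau> = Lambda d n (n div r) (prod.swap \<tau>)"
proof -
  have "prod.swap ` Lambda d n r \<tau> = (\<lambda>(a, b). prod.swap (lattice_map \<tau> (a, b))) ` (b_ideal d n r \<times> O_dual d)"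
    unfolding Lambda_def by (simp add: image_image case_prod_beta)
  also have "\<dots> = lattice_map (prod.swap \<tau>) ` map_prod prod.swap prod.swap ` (b_ideal d n r \<times> O_dual d)"
    unfolding lattice_map_swap image_image by (simp add: map_prod_def case_prod_beta)
  also have "\<dots> = Lambda d n (n div r) (prod.swap \<tau>)"
    unfolding Lambda_def map_prod_surj_on[OF refl refl] b_ideal_swap[OF assms(2,3)] O_dual_swap[OF assms(1)] ..
  finally show ?thesis .
qed

lemma pol_form_swap:
  "pol_form (prod.swap \<tau>) (prod.swap v) (prod.swap w) = pol_form \<tau> v w"
  by (simp add: pol_form_def)

theorem theorem3p1:
  fixes d n r :: nat and \<tau> :: "complex \<times> complex"
  assumes "d > 1" and "n > 0" and "squarefree n" and "r dvd n"
    and "Im (fst \<tau>) > 0" and "Im (snd \<tau>) > 0"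
  shows "is_k_times_unimodular (Lambda d n r \<tau> \<inter> {v. snd v = 0}) (pol_form \<tau>) (int (lcm d r))
       \<and> is_k_times_unimodular (Lambda d n r \<tau> \<inter> {v. fst v = 0}) (pol_form \<tau>) (int (lcm d (n div r)))"
proof
  have "d > 0" and "r > 0" and "n div r > 0"
    using assms by (auto simp: dvd_div_eq_0_iff intro: Nat.gr0I)
  then show "is_k_times_unimodular (Lambda d n r \<tau> \<inter> {v. snd v = 0}) (pol_form \<tau>) (int (lcm d r))"
    using assms by (intro is_k_times_unimodular_Lambda_first_axis)
  have swap_axis: "prod.swap ` (Lambda d n r \<tau> \<inter> {v. fst v = 0}) =
      Lambda d n (n div r) (prod.swap \<tau>) \<inter> {v. snd v = 0}"
  proof -
    have "prod.swap ` (Lambda d n r \<tau> \<inter> {v. fst v = 0}) = prod.swap ` Lambda d n r \<tau> \<inter> {v. snd v = 0}"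
      by (auto simp: image_iff)
    then show ?thesis
      by (simp add: Lambda_swap \<open>d > 0\<close> assms(2,4))
  qed
  have "is_k_times_unimodular (Lambda d n (n div r) (prod.swap \<tau>) \<inter> {v. snd v = 0})
      (pol_form (prod.swap \<tau>)) (int (lcm d (n div r)))"
    using \<open>d > 0\<close> \<open>n div r > 0\<close> assms(5,6) by (simp add: is_k_times_unimodular_Lambda_first_axis)
  then have "is_k_times_unimodular (prod.swap ` prod.swap ` (Lambda d n r \<tau> \<inter> {v. fst v = 0}))
      (pol_form \<tau>) (int (lcm d (n div r)))"
    unfolding swap_axis
    by (rule is_k_times_unimodular_linear_image[OF _ linear_swap inj_swap]) (metis pol_form_swap swap_swap)
  then show "is_k_times_unimodular (Lambda d n r \<tau> \<inter> {v. fst v = 0}) (pol_form \<tau>) (int (lcm d (n div r)))"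
    by (simp add: image_image)
qed

end
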